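(* If $P$ and $Q$ are partition polynomials, then the composition $P\circ Q$ is also a partition polynomial.
   Context: A polynomial $P(X)$ with integer coefficients is called a partition polynomial if it can be written in the form \[P(X)=a_nX^n + a_{n-1}X^{n-1}(1-X) + \cdots + a_0(1-X)^n\] for some integer $n\ge 0$ and some integers $a_0,\dots,a_n$ with $0\le a_i\le \binom{n}{i}$ for all $i\le n$. *)

theory Defs
  imports "HOL-Computational_Algebra.Polynomial"
begin

definition partition_poly :: "int poly \<Rightarrow> bool" where
  "partition_poly P \<longleftrightarrow> (\<exists>(n::nat) (a::nat \<Rightarrow> int).
     (\<forall>i\<le>n. 0 \<le> a i \<and> a i \<le> int (n choose i)) \<and>
     P = (\<Sum>i\<le>n. smult (a i) ([:0, 1:] ^ i * [:1, -1:] ^ (n - i))))"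

end

theory Submission
  imports Defs
begin

text \<open>Expand polynomials in the basis \<open>X^k (1 - X)^(N - k)\<close>, \<open>k \<le> N\<close>. Since
  \<open>1 = \<Sum>k\<le>N. (N choose k) X^k (1 - X)^(N - k)\<close> and the expansion is unique, \<open>P\<close> is a
  partition polynomial exactly when, for some \<open>N\<close>, both \<open>P\<close> and \<open>1 - P\<close> have nonnegative
  coefficients in this basis. Polynomials with nonnegative coefficients form a cone that is closed
  under products, the degrees \<open>N\<close> adding up. Hence if \<open>Q\<close> and \<open>1 - Q\<close> lie in the cone of
  degree \<open>m\<close>, substituting \<open>Q\<close> into \<open>X^i (1 - X)^(n - i)\<close> gives \<open>Q^i (1 - Q)^(n - i)\<close>
  in the cone of degree \<open>n m\<close>, so composition with \<open>Q\<close> maps the degree-\<open>n\<close> cone into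
  the degree-\<open>n m\<close> cone. Applying this to \<open>P\<close> and to \<open>1 - P\<close>, whose composite with \<open>Q\<close> is
  \<open>1 - P \<circ> Q\<close>, proves the theorem.\<close>

definition bernstein_expansion :: "nat \<Rightarrow> (nat \<Rightarrow> 'a::comm_ring_1) \<Rightarrow> 'a poly" where
  "bernstein_expansion N c = (\<Sum>k\<le>N. smult (c k) ([:0, 1:] ^ k * [:1, -1:] ^ (N - k)))"

definition bernstein_nonneg :: "nat \<Rightarrow> 'a::linordered_idom poly \<Rightarrow> bool" where
  "bernstein_nonneg N p \<longleftrightarrow> (\<exists>c. (\<forall>k\<le>N. 0 \<le> c k) \<and> p = bernstein_expansion N c)"

lemma bernstein_expansion_add:
  "bernstein_expansion N (\<lambda>k. c k + d k) = bernstein_expansion N c + bernstein_expansion N d"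
  by (simp add: bernstein_expansion_def smult_add_left sum.distrib)

lemma bernstein_expansion_diff:
  "bernstein_expansion N (\<lambda>k. c k - d k) = bernstein_expansion N c - bernstein_expansion N d"
  by (simp add: bernstein_expansion_def smult_diff_left sum_subtractf)

lemma bernstein_expansion_binomial: "bernstein_expansion N (\<lambda>k. of_nat (N choose k)) = 1"
proof -
  have "bernstein_expansion N (\<lambda>k. of_nat (N choose k)) =
      (\<Sum>k\<le>N. of_nat (N choose k) * [:0, 1:] ^ k * [:1, -1:] ^ (N - k))"
    by (simp add: bernstein_expansion_def of_nat_poly mult.assoc)
  also have "\<dots> = ([:0, 1:] + [:1, -1:]) ^ N"
    by (rule binomial_ring[symmetric])
  also have "[:0, 1:] + [:1, -1:] = (1 :: 'a poly)"
    by (simp add: one_pCons)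
  finally show ?thesis
    by simp
qed

lemma bernstein_expansion_Suc:
  "bernstein_expansion (Suc N) c =
     smult (c 0) ([:1, -1:] ^ Suc N) + [:0, 1:] * bernstein_expansion N (\<lambda>k. c (Suc k))"
  unfolding bernstein_expansion_def sum.atMost_Suc_shift
  by (simp add: sum_distrib_left algebra_simps)

lemma bernstein_expansion_eq_0_iff:
  "bernstein_expansion N c = 0 \<longleftrightarrow> (\<forall>k\<le>N. c k = 0)"
proof (induction N arbitrary: c)
  case 0
  then show ?case by (simp add: bernstein_expansion_def)
next
  case (Suc N)
  have "bernstein_expansion (Suc N) c = 0 \<longleftrightarrow>
      c 0 = 0 \<and> bernstein_expansion N (\<lambda>k. c (Suc k)) = 0" (is "?p = 0 \<longleftrightarrow> _")
  proof
    assume "?p = 0"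
    moreover have "poly ?p 0 = c 0"
      by (simp add: bernstein_expansion_Suc)
    ultimately show "c 0 = 0 \<and> bernstein_expansion N (\<lambda>k. c (Suc k)) = 0"
      by (simp add: bernstein_expansion_Suc)
  qed (simp add: bernstein_expansion_Suc)
  also have "\<dots> \<longleftrightarrow> (\<forall>k\<le>Suc N. c k = 0)"
    unfolding Suc.IH by (simp add: All_less_Suc2 flip: less_Suc_eq_le)
  finally show ?case .
qed

lemma bernstein_expansion_inject:
  "bernstein_expansion N c = bernstein_expansion N d \<longleftrightarrow> (\<forall>k\<le>N. c k = d k)"
  using bernstein_expansion_eq_0_iff[of N "\<lambda>k. c k - d k"]
  by (simp add: bernstein_expansion_diff)

lemma bernstein_nonneg_0: "bernstein_nonneg N 0"
  unfolding bernstein_nonneg_def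
  by (rule exI[of _ "\<lambda>_. 0"]) (simp add: bernstein_expansion_def)

lemma bernstein_nonneg_add:
  assumes "bernstein_nonneg N p" "bernstein_nonneg N q"
  shows "bernstein_nonneg N (p + q)"
proof -
  obtain c d where "\<forall>k\<le>N. 0 \<le> c k" "p = bernstein_expansion N c"
    and "\<forall>k\<le>N. 0 \<le> d k" "q = bernstein_expansion N d"
    using assms unfolding bernstein_nonneg_def by blast
  then show ?thesis
    unfolding bernstein_nonneg_def
    by (intro exI[of _ "\<lambda>k. c k + d k"]) (simp add: bernstein_expansion_add)
qed

lemma bernstein_nonneg_sum:
  "(\<And>i. i \<in> A \<Longrightarrow> bernstein_nonneg N (f i)) \<Longrightarrow> bernstein_nonneg N (\<Sum>i\<in>A. f i)"
  by (induction A rule: infinite_finite_induct) (auto intro: bernstein_nonneg_0 bernstein_nonneg_add)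

lemma bernstein_nonneg_smult_basis:
  assumes "0 \<le> r" "k \<le> N"
  shows "bernstein_nonneg N (smult r ([:0, 1:] ^ k * [:1, -1:] ^ (N - k)))"
  unfolding bernstein_nonneg_def bernstein_expansion_def
  using assms
  by (intro exI[of _ "\<lambda>i. if i = k then r else 0"])
    (simp add: if_distrib[where f = "\<lambda>a. smult a _"] cong del: if_weak_cong)

lemma bernstein_nonneg_mult:
  assumes "bernstein_nonneg n p" "bernstein_nonneg m q"
  shows "bernstein_nonneg (n + m) (p * q)"
proof -
  obtain c d where c: "\<forall>k\<le>n. 0 \<le> c k" "p = bernstein_expansion n c"
    and d: "\<forall>k\<le>m. 0 \<le> d k" "q = bernstein_expansion m d"
    using assms unfolding bernstein_nonneg_def by blast
  have "p * q = (\<Sum>i\<le>n. \<Sum>j\<le>m. smult (c i) ([:0, 1:] ^ i * [:1, -1:] ^ (n - i)) *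
      smult (d j) ([:0, 1:] ^ j * [:1, -1:] ^ (m - j)))"
    unfolding c d bernstein_expansion_def by (rule sum_product)
  also have "\<dots> = (\<Sum>i\<le>n. \<Sum>j\<le>m.
      smult (c i * d j) ([:0, 1:] ^ (i + j) * [:1, -1:] ^ (n + m - (i + j))))"
  proof (intro sum.cong refl)
    fix i j assume "i \<in> {..n}" "j \<in> {..m}"
    then have "n + m - (i + j) = (n - i) + (m - j)" by auto
    then show "smult (c i) ([:0, 1:] ^ i * [:1, -1:] ^ (n - i)) *
        smult (d j) ([:0, 1:] ^ j * [:1, -1:] ^ (m - j)) =
      smult (c i * d j) ([:0, 1:] ^ (i + j) * [:1, -1:] ^ (n + m - (i + j)))"
      by (simp add: power_add algebra_simps)
  qed
  finally show ?thesis
    using c d by (auto intro!: bernstein_nonneg_sum bernstein_nonneg_smult_basis)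
qed

lemma bernstein_nonneg_power:
  "bernstein_nonneg m q \<Longrightarrow> bernstein_nonneg (j * m) (q ^ j)"
proof (induction j)
  case 0
  have "bernstein_nonneg 0 (smult 1 ([:0, 1:] ^ 0 * [:1, -1:] ^ (0 - 0)) :: 'a poly)"
    by (rule bernstein_nonneg_smult_basis) simp_all
  then show ?case by (simp add: one_pCons)
next
  case (Suc j)
  then show ?case
    using bernstein_nonneg_mult[of m q "j * m" "q ^ j"] by simp
qed

lemma bernstein_nonneg_smult:
  assumes "0 \<le> r" "bernstein_nonneg N p"
  shows "bernstein_nonneg N (smult r p)"
proof -
  have "bernstein_nonneg 0 (smult r ([:0, 1:] ^ 0 * [:1, -1:] ^ (0 - 0)))"
    using assms(1) by (rule bernstein_nonneg_smult_basis) simp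
  from bernstein_nonneg_mult[OF this assms(2)] show ?thesis
    by simp
qed

lemma pcompose_power: "pcompose (p ^ k) q = pcompose p q ^ k"
  for p q :: "'a::comm_semiring_1 poly"
  by (induction k) (simp_all add: pcompose_1 pcompose_mult)

lemma bernstein_nonneg_pcompose:
  assumes p: "bernstein_nonneg n p"
    and q: "bernstein_nonneg m q" "bernstein_nonneg m (1 - q)"
  shows "bernstein_nonneg (n * m) (pcompose p q)"
proof -
  obtain c where c: "\<forall>k\<le>n. 0 \<le> c k" "p = bernstein_expansion n c"
    using p unfolding bernstein_nonneg_def by blast
  have "pcompose p q = (\<Sum>i\<le>n. smult (c i) (q ^ i * (1 - q) ^ (n - i)))"
    by (simp add: c(2) bernstein_expansion_def pcompose_sum pcompose_smult pcompose_mult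
        pcompose_power pcompose_pCons one_pCons)
  also have "bernstein_nonneg (n * m) \<dots>"
  proof (intro bernstein_nonneg_sum bernstein_nonneg_smult)
    fix i assume "i \<in> {..n}"
    then have "n * m = i * m + (n - i) * m"
      by (simp flip: distrib_right)
    then show "bernstein_nonneg (n * m) (q ^ i * (1 - q) ^ (n - i))"
      using q by (simp add: bernstein_nonneg_mult bernstein_nonneg_power)
    show "0 \<le> c i"
      using c(1) \<open>i \<in> {..n}\<close> by simp
  qed
  finally show ?thesis .
qed

lemma partition_poly_iff_bernstein_nonneg:
  "partition_poly P \<longleftrightarrow> (\<exists>N. bernstein_nonneg N P \<and> bernstein_nonneg N (1 - P))"
proof
  assume "partition_poly P"
  then obtain N a where a: "\<forall>k\<le>N. 0 \<le> a k \<and> a k \<le> int (N choose k)"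
    and P: "P = bernstein_expansion N a"
    unfolding partition_poly_def bernstein_expansion_def by blast
  have "1 - P = bernstein_expansion N (\<lambda>k. int (N choose k) - a k)"
    by (simp add: P bernstein_expansion_diff bernstein_expansion_binomial)
  then show "\<exists>N. bernstein_nonneg N P \<and> bernstein_nonneg N (1 - P)"
    using a P unfolding bernstein_nonneg_def
    by (intro exI[of _ N] conjI exI[of _ a] exI[of _ "\<lambda>k. int (N choose k) - a k"]) auto
next
  assume "\<exists>N. bernstein_nonneg N P \<and> bernstein_nonneg N (1 - P)"
  then obtain N c d where c: "\<forall>k\<le>N. 0 \<le> c k" "P = bernstein_expansion N c"
    and d: "\<forall>k\<le>N. 0 \<le> d k" "1 - P = bernstein_expansion N d"
    unfolding bernstein_nonneg_def by blast
  have "bernstein_expansion N (\<lambda>k. c k + d k) = bernstein_expansion N (\<lambda>k. int (N choose k))"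
    by (simp add: bernstein_expansion_add bernstein_expansion_binomial flip: c(2) d(2))
  then have "\<forall>k\<le>N. c k + d k = int (N choose k)"
    by (simp add: bernstein_expansion_inject)
  with c(1) d(1) have "\<forall>k\<le>N. 0 \<le> c k \<and> c k \<le> int (N choose k)"
    by (metis le_add_same_cancel1)
  with c(2) show "partition_poly P"
    unfolding partition_poly_def bernstein_expansion_def by blast
qed

theorem mainTheorem3:
  fixes P Q :: "int poly"
  assumes "partition_poly P" and "partition_poly Q"
  shows "partition_poly (pcompose P Q)"
proof -
  obtain n where P: "bernstein_nonneg n P" "bernstein_nonneg n (1 - P)"
    using assms(1) by (auto simp: partition_poly_iff_bernstein_nonneg)
  obtain m where Q: "bernstein_nonneg m Q" "bernstein_nonneg m (1 - Q)"
    using assms(2) by (auto simp: partition_poly_iff_bernstein_nonneg)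
  have "1 - pcompose P Q = pcompose (1 - P) Q"
    by (simp add: pcompose_diff pcompose_1)
  then show ?thesis
    unfolding partition_poly_iff_bernstein_nonneg
    using bernstein_nonneg_pcompose[OF P(1) Q] bernstein_nonneg_pcompose[OF P(2) Q] by auto
qed

end
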